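(* Consider a Bayesian persuasion setting with binary state space $\Theta=\{\theta_1,\theta_2\}$, binary action space $A=\{a_1,a_2\}$, a finite signal space $\Sigma$ with $|\Sigma|\ge 2$, common prior with $p=\Pr_\mu[\theta=\theta_1]$, sender utility $u_S:\Theta\times A\to\mathbb{R}$ and receiver utility $u_R:\Theta\times A\to\mathbb{R}$. Assume the receiver is state-matching: $u_R(\theta_1,a_1)\ge u_R(\theta_1,a_2)$ and $u_R(\theta_2,a_2)\ge u_R(\theta_2,a_1)$; and the sender is action-matching: $u_S(\theta_1,a_1)\ge u_S(\theta_2,a_1)$ and $u_S(\theta_2,a_2)\ge u_S(\theta_1,a_2)$. Let $(\ell,h)$ and $(\ell',h')$ be two feasible constraints, i.e. $\ell\le p\le h$ and $\ell'\le p\le h'$, such that $(\ell,h)$ is more binding than $(\ell',h')$, i.e. $\ell'\le \ell$ and $h\le h'$. Let $\Phi$ and $\Phi'$ be the sets of sender-optimal signaling schemes under the constraints $(\ell,h)$ and $(\ell',h')$ respectively. Let $\varphi\in\Phi$ maximize the receiver's expected utility $\mathbb{E}_{\theta\sim\mu,\sigma\sim\varphi(\theta),a\sim\pi_\varphi(\sigma)}[u_R(\theta,a)]$ over $\Phi$, and let $\varphi'\in\Phi'$ maximize the receiver's expected utility $\mathbb{E}_{\theta\sim\mu,\sigma\sim\varphi'(\theta),a\sim\pi_{\varphi'}(\sigma)}[u_R(\theta,a)]$ over $\Phi'$. Then $$\mathbb{E}_{\theta\sim\mu,\sigma\sim\varphi(\theta),a\sim\pi_\varphi(\sigma)}[u_R(\theta,a)]\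 \ge\ \mathbb{E}_{\theta\sim\mu,\sigma\sim\varphi'(\theta),a\sim\pi_{\varphi'}(\sigma)}[u_R(\theta,a)].$$
   Context: The sender commits to a signaling scheme $\varphi:\Theta\to\Delta(\Sigma)$ before observing the state $\theta\sim\mu$, then sends $\sigma\sim\varphi(\theta)$. The receiver observes $\sigma$ and chooses an action via a (possibly randomized) strategy $\pi:\Sigma\to\Delta(A)$. A constraint $(\ell,h)$ with $0\le\ell\le h\le 1$ requires that the overall probability (over the randomness of the state, the sender's signal and the receiver's randomization) that the receiver plays $a_1$ lies in $[\ell,h]$, i.e. $\ell\le \Pr_{\mu,\varphi,\pi}[\pi(\varphi(\theta))=a_1]\le h$. Under a constraint, the receiver's best response $\pi_\varphi$ to $\varphi$ is a strategy satisfying the constraint that maximizes her expected utility $\mathbb{E}[u_R(\theta,a)]$ among all strategies satisfying the constraint, with ties broken in favor of the sender. A signaling scheme is sender-optimal under a constraint if it maximizes the sender's expected utility $\mathbb{E}_{\theta\sim\mu,\sigma\sim\varphi(\theta),a\sim\pi_\varphi(\sigma)}[u_S(\theta,a)]$ given that the receiver plays her constrained best response. *)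

theory Defs
  imports Complex_Main
begin

datatype state = T1 | T2
datatype action = A1 | A2

definition prior :: "real \<Rightarrow> state \<Rightarrow> real" where
  "prior p t = (case t of T1 \<Rightarrow> p | T2 \<Rightarrow> 1 - p)"

definition is_scheme :: "(state \<Rightarrow> 's::finite \<Rightarrow> real) \<Rightarrow> bool" where
  "is_scheme phi \<longleftrightarrow> (\<forall>t s. 0 \<le> phi t s) \<and> (\<forall>t. (\<Sum>s\<in>UNIV. phi t s) = 1)"

text \<open>Receiver strategy: st s = probability of playing A1 after signal s
  (a distribution over the binary action set).\<close>
definition is_strategy :: "('s \<Rightarrow> real) \<Rightarrow> bool" where
  "is_strategy st \<longleftrightarrow> (\<forall>s. 0 \<le> st s \<and> st s \<le> 1)"

definition act_prob :: "('s \<Rightarrow> real) \<Rightarrow> 's \<Rightarrow> action \<Rightarrow> real" where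
  "act_prob st s a = (case a of A1 \<Rightarrow> st s | A2 \<Rightarrow> 1 - st s)"

definition exp_util ::
  "(state \<Rightarrow> action \<Rightarrow> real) \<Rightarrow> real \<Rightarrow> (state \<Rightarrow> 's::finite \<Rightarrow> real) \<Rightarrow> ('s \<Rightarrow> real) \<Rightarrow> real" where
  "exp_util u p phi st =
     (\<Sum>t\<in>{T1,T2}. \<Sum>s\<in>UNIV. \<Sum>a\<in>{A1,A2}. prior p t * phi t s * act_prob st s a * u t a)"

definition prob_a1 :: "real \<Rightarrow> (state \<Rightarrow> 's::finite \<Rightarrow> real) \<Rightarrow> ('s \<Rightarrow> real) \<Rightarrow> real" where
  "prob_a1 p phi st = (\<Sum>t\<in>{T1,T2}. \<Sum>s\<in>UNIV. prior p t * phi t s * st s)"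

definition satisfies :: "real \<Rightarrow> real \<Rightarrow> real \<Rightarrow> (state \<Rightarrow> 's::finite \<Rightarrow> real) \<Rightarrow> ('s \<Rightarrow> real) \<Rightarrow> bool" where
  "satisfies l h p phi st \<longleftrightarrow> is_strategy st \<and> l \<le> prob_a1 p phi st \<and> prob_a1 p phi st \<le> h"

definition receiver_opt ::
  "(state \<Rightarrow> action \<Rightarrow> real) \<Rightarrow> real \<Rightarrow> real \<Rightarrow> real \<Rightarrow> (state \<Rightarrow> 's::finite \<Rightarrow> real) \<Rightarrow> ('s \<Rightarrow> real) \<Rightarrow> bool" where
  "receiver_opt uR l h p phi st \<longleftrightarrow> satisfies l h p phi st \<and>
     (\<forall>st'. satisfies l h p phi st' \<longrightarrow> exp_util uR p phi st' \<le> exp_util uR p phi st)"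

definition best_response ::
  "(state \<Rightarrow> action \<Rightarrow> real) \<Rightarrow> (state \<Rightarrow> action \<Rightarrow> real) \<Rightarrow> real \<Rightarrow> real \<Rightarrow> real \<Rightarrow>
   (state \<Rightarrow> 's::finite \<Rightarrow> real) \<Rightarrow> ('s \<Rightarrow> real) \<Rightarrow> bool" where
  "best_response uS uR l h p phi st \<longleftrightarrow> receiver_opt uR l h p phi st \<and>
     (\<forall>st'. receiver_opt uR l h p phi st' \<longrightarrow> exp_util uS p phi st' \<le> exp_util uS p phi st)"

definition sender_optimal ::
  "(state \<Rightarrow> action \<Rightarrow> real) \<Rightarrow> (state \<Rightarrow> action \<Rightarrow> real) \<Rightarrow> real \<Rightarrow> real \<Rightarrow> real \<Rightarrow>
   (state \<Rightarrow> 's::finite \<Rightarrow> real) \<Rightarrow> bool" where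
  "sender_optimal uS uR l h p phi \<longleftrightarrow> is_scheme phi \<and>
     (\<exists>st. best_response uS uR l h p phi st \<and>
        (\<forall>(psi :: state \<Rightarrow> 's \<Rightarrow> real) rho. is_scheme psi \<and> best_response uS uR l h p psi rho \<longrightarrow>
            exp_util uS p psi rho \<le> exp_util uS p phi st))"

end

theory Submission
  imports Defs
begin

(* A scheme and a receiver strategy matter only through x = Pr[theta1 and a1] and
   y = Pr[theta2 and a1]: both expected utilities are affine in (x, y) and Pr[a1] = x + y.
   Constrained optimality of the receiver confines (x, y) to a region, because scaling her
   strategy towards "always a2" (if the lower bound is slack) or towards "always a1" (if the
   upper bound is slack) must not help her. On this region the sender's utility, with ties
   broken by the receiver's, is maximised at an explicit target point, which a two-signal
   recommendation scheme implements. So a sender-optimal scheme gives the receiver at most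
   her utility at the target, the receiver-best one attains it, and relaxing the constraint
   can only lower the receiver's utility at the target. *)

definition feasible_constraint :: "real \<Rightarrow> real \<Rightarrow> real \<Rightarrow> bool" where
  "feasible_constraint p l h \<longleftrightarrow> 0 \<le> l \<and> l \<le> p \<and> p \<le> h \<and> h \<le> 1"

(* (x, y) stands for (Pr[theta1 and a1], Pr[theta2 and a1]) under the prior p; a and b are the
   receiver's gains from matching the state in theta1 and theta2, g and d the sender's gains
   from a1 in theta1 and from a2 in theta2. *)
definition feasible_outcome :: "real \<Rightarrow> real \<Rightarrow> real \<Rightarrow> real \<Rightarrow> real \<Rightarrow> bool" where
  "feasible_outcome p l h x y \<longleftrightarrow>
     0 \<le> x \<and> x \<le> p \<and> 0 \<le> y \<and> y \<le> 1 - p \<and> l \<le> x + y \<and> x + y \<le> h"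

definition obedient :: "real \<Rightarrow> real \<Rightarrow> real \<Rightarrow> real \<Rightarrow> real \<Rightarrow> bool" where
  "obedient a b p x y \<longleftrightarrow> b * y \<le> a * x \<and> a * (p - x) \<le> b * (1 - p - y)"

definition receiver_rational ::
  "real \<Rightarrow> real \<Rightarrow> real \<Rightarrow> real \<Rightarrow> real \<Rightarrow> real \<Rightarrow> real \<Rightarrow> bool" where
  "receiver_rational a b p l h x y \<longleftrightarrow> feasible_outcome p l h x y \<and>
     (l < x + y \<longrightarrow> b * y \<le> a * x) \<and> (x + y < h \<longrightarrow> a * (p - x) \<le> b * (1 - p - y))"

(* As g + d >= 0, at most one of g, d is negative. If g < 0 the sender wants a2 in both
   states and pushes Pr[a1] down towards l, as far as the receiver still obeys a recommendation
   of a2; symmetrically for d < 0; otherwise the state is revealed. *)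
definition target_x :: "real \<Rightarrow> real \<Rightarrow> real \<Rightarrow> real \<Rightarrow> real \<Rightarrow> real" where
  "target_x a b g p l =
     (if g < 0 then (if a * (p - l) \<le> b * (1 - p) then l else p - b * (1 - p) / a) else p)"

definition target_y :: "real \<Rightarrow> real \<Rightarrow> real \<Rightarrow> real \<Rightarrow> real \<Rightarrow> real" where
  "target_y a b d p h =
     (if d < 0 then (if b * (h - p) \<le> a * p then h - p else a * p / b) else 0)"

lemma mult_target_x:
  assumes "0 \<le> b" "p \<le> 1"
  shows "a * target_x a b g p l = (if g < 0 then max (a * l) (a * p - b * (1 - p)) else a * p)"
proof (cases "g < 0 \<and> \<not> a * (p - l) \<le> b * (1 - p)")
  case True
  then have "a \<noteq> 0" using assms by (auto simp: mult_nonneg_nonneg)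
  then have "a * (p - b * (1 - p) / a) = a * p - b * (1 - p)"
    by (simp add: field_simps)
  then show ?thesis using True by (auto simp: target_x_def max_def algebra_simps)
qed (auto simp: target_x_def max_def algebra_simps)

lemma mult_target_y:
  assumes "0 \<le> a" "0 \<le> p"
  shows "b * target_y a b d p h = (if d < 0 then min (b * (h - p)) (a * p) else 0)"
proof (cases "d < 0 \<and> \<not> b * (h - p) \<le> a * p")
  case True
  then have "b \<noteq> 0" using assms by auto
  then show ?thesis using True by (auto simp: target_y_def min_def)
qed (auto simp: target_y_def min_def)

lemma target_x_feasible_obedient:
  assumes "0 \<le> a" "0 \<le> b" "g < 0" "feasible_constraint p l h"
  shows "feasible_outcome p l h (target_x a b g p l) 0 \<and> obedient a b p (target_x a b g p l) 0"
proof -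
  have lh: "0 \<le> l" "l \<le> p" "p \<le> h" "h \<le> 1"
    using assms(4) by (auto simp: feasible_constraint_def)
  show ?thesis
  proof (cases "a * (p - l) \<le> b * (1 - p)")
    case True
    then show ?thesis using assms(1,3) lh
      by (simp add: target_x_def feasible_outcome_def obedient_def)
  next
    case False
    define z where "z = b * (1 - p) / a"
    have "0 \<le> b * (1 - p)" using assms(2) lh by simp
    then have "0 < a * (p - l)" using False by linarith
    then have "0 < a" using lh by (simp add: zero_less_mult_iff)
    then have z: "a * z = b * (1 - p)" "0 \<le> z" "z < p - l"
      using False assms(2) lh by (auto simp: z_def mult.commute pos_divide_less_eq)
    have "target_x a b g p l = p - z" using False assms(3) by (simp add: target_x_def z_def)
    moreover have "a * z \<le> a * p" using z(3) lh \<open>0 < a\<close> by (simp add: mult_left_mono)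
    ultimately show ?thesis using z lh
      by (simp add: feasible_outcome_def obedient_def right_diff_distrib)
  qed
qed

lemma target_y_feasible_obedient:
  assumes "0 \<le> a" "0 \<le> b" "d < 0" "feasible_constraint p l h"
  shows "feasible_outcome p l h p (target_y a b d p h) \<and> obedient a b p p (target_y a b d p h)"
proof -
  have lh: "0 \<le> l" "l \<le> p" "p \<le> h" "h \<le> 1"
    using assms(4) by (auto simp: feasible_constraint_def)
  show ?thesis
  proof (cases "b * (h - p) \<le> a * p")
    case True
    then show ?thesis using assms(2,3) lh
      by (simp add: target_y_def feasible_outcome_def obedient_def)
  next
    case False
    define w where "w = a * p / b"
    have "0 \<le> a * p" using assms(1) lh by simp
    then have "0 < b * (h - p)" using False by linarith
    then have "0 < b" using lh by (simp add: zero_less_mult_iff)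
    then have w: "b * w = a * p" "0 \<le> w" "w < h - p"
      using False assms(1) lh by (auto simp: w_def mult.commute pos_divide_less_eq)
    have "target_y a b d p h = w" using False assms(3) by (simp add: target_y_def w_def)
    moreover have "b * w \<le> b * (1 - p)" using w(3) lh \<open>0 < b\<close> by (simp add: mult_left_mono)
    ultimately show ?thesis using w lh
      by (simp add: feasible_outcome_def obedient_def right_diff_distrib)
  qed
qed

lemma target_feasible_obedient:
  assumes "0 \<le> a" "0 \<le> b" "0 \<le> g + d" "feasible_constraint p l h"
  shows "feasible_outcome p l h (target_x a b g p l) (target_y a b d p h) \<and>
    obedient a b p (target_x a b g p l) (target_y a b d p h)"
proof -
  consider "g < 0" | "d < 0" | "0 \<le> g" "0 \<le> d" by linarith
  then show ?thesis
  proof cases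
    case 1
    then have "target_y a b d p h = 0" using assms(3) by (simp add: target_y_def)
    then show ?thesis using target_x_feasible_obedient[OF assms(1,2) 1 assms(4)] by simp
  next
    case 2
    then have "target_x a b g p l = p" using assms(3) by (simp add: target_x_def)
    then show ?thesis using target_y_feasible_obedient[OF assms(1,2) 2 assms(4)] by simp
  next
    case 3
    then show ?thesis using assms(1,2,4)
      by (simp add: target_x_def target_y_def feasible_outcome_def obedient_def feasible_constraint_def)
  qed
qed

lemma target_x_le_prob_a1:
  assumes "0 \<le> b" "g < 0" "feasible_constraint p l h" "receiver_rational a b p l h x y"
  shows "target_x a b g p l \<le> x + y"
proof (cases "a * (p - l) \<le> b * (1 - p)")
  case True
  then show ?thesis using assms(2,4)
    by (simp add: target_x_def receiver_rational_def feasible_outcome_def)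
next
  case False
  define z where "z = b * (1 - p) / a"
  have xy: "0 \<le> y" "x + y \<le> h" "x + y < h \<longrightarrow> a * (p - x) \<le> b * (1 - p - y)"
    using assms(4) by (auto simp: receiver_rational_def feasible_outcome_def)
  have "0 \<le> b * (1 - p)" using assms(1,3) by (simp add: feasible_constraint_def)
  then have "0 < a * (p - l)" using False by linarith
  then have "0 < a" using assms(3) by (simp add: feasible_constraint_def zero_less_mult_iff)
  then have az: "a * z = b * (1 - p)" and "0 \<le> z"
    using \<open>0 \<le> b * (1 - p)\<close> by (simp_all add: z_def)
  have "p - z \<le> x + y"
  proof (cases "x + y < h")
    case True
    have "b * (1 - p - y) \<le> b * (1 - p)" using xy(1) assms(1) by (simp add: mult_left_mono)
    then have "a * (p - x) \<le> a * z" using True xy(3) az by linarith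
    then show ?thesis using \<open>0 < a\<close> xy(1) by simp
  next
    case False
    then show ?thesis using xy(2) assms(3) \<open>0 \<le> z\<close> by (simp add: feasible_constraint_def)
  qed
  then show ?thesis using False assms(2) by (simp add: target_x_def z_def)
qed

lemma prob_a1_le_target_y:
  assumes "0 \<le> a" "d < 0" "feasible_constraint p l h" "receiver_rational a b p l h x y"
  shows "x + y \<le> p + target_y a b d p h"
proof (cases "b * (h - p) \<le> a * p")
  case True
  then show ?thesis using assms(2,4)
    by (simp add: target_y_def receiver_rational_def feasible_outcome_def)
next
  case False
  define w where "w = a * p / b"
  have xy: "x \<le> p" "l \<le> x + y" "l < x + y \<longrightarrow> b * y \<le> a * x"
    using assms(4) by (auto simp: receiver_rational_def feasible_outcome_def)
  have "0 \<le> a * p" using assms(1,3) by (simp add: feasible_constraint_def)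
  then have "0 < b * (h - p)" using False by linarith
  then have "0 < b" using assms(3) by (simp add: feasible_constraint_def zero_less_mult_iff)
  then have bw: "b * w = a * p" and "0 \<le> w"
    using \<open>0 \<le> a * p\<close> by (simp_all add: w_def)
  have "x + y \<le> p + w"
  proof (cases "l < x + y")
    case True
    have "a * x \<le> a * p" using xy(1) assms(1) by (simp add: mult_left_mono)
    then have "b * y \<le> b * w" using True xy(3) bw by linarith
    then show ?thesis using \<open>0 < b\<close> xy(1) by simp
  next
    case False
    then show ?thesis using xy(2) assms(3) \<open>0 \<le> w\<close> by (simp add: feasible_constraint_def)
  qed
  then show ?thesis using False assms(2) by (simp add: target_y_def w_def)
qed

lemma target_lex_max_g_neg:
  assumes "0 \<le> a" "0 \<le> b" "0 \<le> g + d" "g < 0" "feasible_constraint p l h"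
    and rational: "receiver_rational a b p l h x y"
  defines "tx \<equiv> target_x a b g p l"
  shows "g * x - d * y \<le> g * tx \<and> (g * tx \<le> g * x - d * y \<longrightarrow> a * x - b * y \<le> a * tx)"
proof -
  have "0 \<le> y" using rational by (simp add: receiver_rational_def feasible_outcome_def)
  then have "0 \<le> a * y" "0 \<le> b * y" "0 \<le> (g + d) * y" using assms(1-3) by simp_all
  have "tx \<le> x + y" using target_x_le_prob_a1[OF assms(2,4,5) rational] by (simp add: tx_def)
  have below_sum: "g * x - d * y \<le> g * (x + y)"
    using \<open>0 \<le> (g + d) * y\<close> by (simp add: distrib_left distrib_right)
  have "a * x - b * y \<le> a * tx" if "g * tx \<le> g * x - d * y"
  proof -
    have "g * tx \<le> g * (x + y)" using that below_sum by linarith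
    then have "x + y \<le> tx" using assms(4) by (simp add: mult_le_cancel_left)
    then have "a * (x + y) \<le> a * tx" using assms(1) by (rule mult_left_mono)
    then show ?thesis using \<open>0 \<le> a * y\<close> \<open>0 \<le> b * y\<close> by (simp add: distrib_left)
  qed
  moreover have "g * (x + y) \<le> g * tx" using assms(4) \<open>tx \<le> x + y\<close> by (simp add: mult_left_mono_neg)
  ultimately show ?thesis using below_sum by simp
qed

lemma target_lex_max_d_neg:
  assumes "0 \<le> a" "0 \<le> b" "0 \<le> g + d" "d < 0" "feasible_constraint p l h"
    and rational: "receiver_rational a b p l h x y"
  defines "ty \<equiv> target_y a b d p h"
  shows "g * x - d * y \<le> g * p - d * ty \<and>
    (g * p - d * ty \<le> g * x - d * y \<longrightarrow> a * x - b * y \<le> a * p - b * ty)"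
proof -
  have "x \<le> p" using rational by (simp add: receiver_rational_def feasible_outcome_def)
  have "x + y \<le> p + ty" using prob_a1_le_target_y[OF assms(1,4,5) rational] by (simp add: ty_def)
  have "(g + d) * x \<le> (g + d) * p" using \<open>x \<le> p\<close> assms(3) by (rule mult_left_mono)
  moreover have "- d * (x + y) \<le> - d * (p + ty)"
    using assms(4) \<open>x + y \<le> p + ty\<close> by (simp add: mult_left_mono)
  moreover have "a * x - b * y \<le> a * p - b * ty" if "g * p - d * ty \<le> g * x - d * y"
  proof -
    have "- d * (p + ty) \<le> - d * (x + y)"
      using that \<open>(g + d) * x \<le> (g + d) * p\<close> by (simp add: distrib_left distrib_right)
    then have "ty \<le> y" using assms(4) \<open>x \<le> p\<close> by (simp add: mult_le_cancel_left)
    then have "b * ty \<le> b * y" using assms(2) by (rule mult_left_mono)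
    moreover have "a * x \<le> a * p" using \<open>x \<le> p\<close> assms(1) by (rule mult_left_mono)
    ultimately show ?thesis by simp
  qed
  ultimately show ?thesis by (simp add: distrib_left distrib_right)
qed

lemma target_lex_max:
  assumes "0 \<le> a" "0 \<le> b" "0 \<le> g + d" "feasible_constraint p l h"
    and rational: "receiver_rational a b p l h x y"
  defines "tx \<equiv> target_x a b g p l" and "ty \<equiv> target_y a b d p h"
  shows "g * x - d * y \<le> g * tx - d * ty \<and>
    (g * tx - d * ty \<le> g * x - d * y \<longrightarrow> a * x - b * y \<le> a * tx - b * ty)"
proof -
  consider "g < 0" | "d < 0" | "0 \<le> g" "0 \<le> d" by linarith
  then show ?thesis
  proof cases
    case 1
    then have "ty = 0" using assms(3) by (simp add: ty_def target_y_def)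
    then show ?thesis using target_lex_max_g_neg[OF assms(1-3) 1 assms(4) rational] by (simp add: tx_def)
  next
    case 2
    then have "tx = p" using assms(3) by (simp add: tx_def target_x_def)
    then show ?thesis using target_lex_max_d_neg[OF assms(1-3) 2 assms(4) rational] by (simp add: ty_def)
  next
    case 3
    have "0 \<le> x" "x \<le> p" "0 \<le> y"
      using rational by (auto simp: receiver_rational_def feasible_outcome_def)
    then have "g * x \<le> g * p" "a * x \<le> a * p" "0 \<le> d * y" "0 \<le> b * y"
      using 3 assms(1,2) by (simp_all add: mult_left_mono)
    moreover have "tx = p" "ty = 0" using 3 by (simp_all add: tx_def ty_def target_x_def target_y_def)
    ultimately show ?thesis by simp
  qed
qed

lemma target_receiver_gain_mono:
  assumes "0 \<le> a" "0 \<le> b" "0 \<le> p" "p \<le> 1" "l' \<le> l" "h \<le> h'"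
  shows "a * target_x a b g p l' - b * target_y a b d p h' \<le>
    a * target_x a b g p l - b * target_y a b d p h"
proof -
  have "a * l' \<le> a * l" "b * (h - p) \<le> b * (h' - p)"
    using assms by (simp_all add: mult_left_mono)
  then show ?thesis using assms by (simp add: mult_target_x mult_target_y max_def min_def)
qed

definition gain_T1 :: "(state \<Rightarrow> action \<Rightarrow> real) \<Rightarrow> real" where
  "gain_T1 u = u T1 A1 - u T1 A2"

definition gain_T2 :: "(state \<Rightarrow> action \<Rightarrow> real) \<Rightarrow> real" where
  "gain_T2 u = u T2 A2 - u T2 A1"

definition joint_prob_a1 ::
  "real \<Rightarrow> (state \<Rightarrow> 's::finite \<Rightarrow> real) \<Rightarrow> ('s \<Rightarrow> real) \<Rightarrow> state \<Rightarrow> real" where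
  "joint_prob_a1 p phi st t = prior p t * (\<Sum>s\<in>UNIV. phi t s * st s)"

definition outcome_util :: "(state \<Rightarrow> action \<Rightarrow> real) \<Rightarrow> real \<Rightarrow> real \<Rightarrow> real \<Rightarrow> real" where
  "outcome_util u p x y = u T1 A1 * x + u T1 A2 * (p - x) + u T2 A1 * y + u T2 A2 * (1 - p - y)"

lemma outcome_util_eq:
  "outcome_util u p x y = u T1 A2 * p + u T2 A2 * (1 - p) + gain_T1 u * x - gain_T2 u * y"
  by (simp add: outcome_util_def gain_T1_def gain_T2_def algebra_simps)

lemma exp_util_state:
  assumes "is_scheme phi"
  shows "(\<Sum>s\<in>UNIV. \<Sum>a\<in>{A1, A2}. prior p t * phi t s * act_prob st s a * u t a) =
    prior p t * (u t A1 * (\<Sum>s\<in>UNIV. phi t s * st s) + u t A2 * (1 - (\<Sum>s\<in>UNIV. phi t s * st s)))"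
proof -
  have "(\<Sum>s\<in>UNIV. \<Sum>a\<in>{A1, A2}. prior p t * phi t s * act_prob st s a * u t a) =
    (\<Sum>s\<in>UNIV. prior p t * u t A2 * phi t s + prior p t * (u t A1 - u t A2) * (phi t s * st s))"
    by (rule sum.cong) (simp_all add: act_prob_def algebra_simps)
  also have "\<dots> = prior p t * u t A2 * (\<Sum>s\<in>UNIV. phi t s)
      + prior p t * (u t A1 - u t A2) * (\<Sum>s\<in>UNIV. phi t s * st s)"
    by (simp add: sum.distrib sum_distrib_left)
  finally show ?thesis using assms by (simp add: is_scheme_def algebra_simps)
qed

lemma exp_util_eq_outcome_util:
  assumes "is_scheme phi"
  shows "exp_util u p phi st =
    outcome_util u p (joint_prob_a1 p phi st T1) (joint_prob_a1 p phi st T2)"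
proof -
  have "exp_util u p phi st = (\<Sum>t\<in>{T1, T2}.
      prior p t * (u t A1 * (\<Sum>s\<in>UNIV. phi t s * st s) + u t A2 * (1 - (\<Sum>s\<in>UNIV. phi t s * st s))))"
    unfolding exp_util_def by (rule sum.cong[OF refl]) (rule exp_util_state[OF assms])
  then show ?thesis
    by (simp add: outcome_util_def joint_prob_a1_def prior_def algebra_simps)
qed

lemma prob_a1_eq: "prob_a1 p phi st = joint_prob_a1 p phi st T1 + joint_prob_a1 p phi st T2"
  by (simp add: prob_a1_def joint_prob_a1_def prior_def sum_distrib_left mult.assoc)

lemma joint_prob_a1_bounds:
  assumes "is_scheme phi" "is_strategy st" "0 \<le> p" "p \<le> 1"
  shows "0 \<le> joint_prob_a1 p phi st t" "joint_prob_a1 p phi st t \<le> prior p t"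
proof -
  have "0 \<le> (\<Sum>s\<in>UNIV. phi t s * st s)"
    using assms(1,2) by (intro sum_nonneg) (simp add: is_scheme_def is_strategy_def)
  moreover have "(\<Sum>s\<in>UNIV. phi t s * st s) \<le> (\<Sum>s\<in>UNIV. phi t s)"
    using assms(1,2) by (intro sum_mono) (simp add: is_scheme_def is_strategy_def mult_left_le)
  moreover have "0 \<le> prior p t" using assms(3,4) by (cases t) (simp_all add: prior_def)
  ultimately show "0 \<le> joint_prob_a1 p phi st t" "joint_prob_a1 p phi st t \<le> prior p t"
    using assms(1) by (simp_all add: joint_prob_a1_def is_scheme_def mult_left_le)
qed

lemma joint_prob_a1_affine:
  assumes "is_scheme phi"
  shows "joint_prob_a1 p phi (\<lambda>s. c * st s + k) t = c * joint_prob_a1 p phi st t + k * prior p t"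
proof -
  have "(\<Sum>s\<in>UNIV. phi t s * (c * st s + k)) = c * (\<Sum>s\<in>UNIV. phi t s * st s) + k * (\<Sum>s\<in>UNIV. phi t s)"
    by (simp add: algebra_simps sum.distrib sum_distrib_left)
  then show ?thesis using assms by (simp add: joint_prob_a1_def is_scheme_def algebra_simps)
qed

lemma receiver_opt_mix_le:
  assumes scheme: "is_scheme phi" and opt: "receiver_opt uR l h p phi st"
    and "0 \<le> c" "c \<le> 1" "0 \<le> k" "k \<le> 1"
    and "l \<le> c * prob_a1 p phi st + (1 - c) * k" "c * prob_a1 p phi st + (1 - c) * k \<le> h"
  defines "x \<equiv> joint_prob_a1 p phi st T1" and "y \<equiv> joint_prob_a1 p phi st T2"
  shows "(1 - c) * (gain_T1 uR * (k * p - x) - gain_T2 uR * (k * (1 - p) - y)) \<le> 0"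
proof -
  define mix where "mix = (\<lambda>s. c * st s + (1 - c) * k)"
  have "is_strategy st" using opt by (simp add: receiver_opt_def satisfies_def)
  then have "is_strategy mix"
    using assms(3-6) unfolding is_strategy_def mix_def
    by (smt (verit) mult_left_le mult_nonneg_nonneg)
  moreover have joint: "joint_prob_a1 p phi mix t = c * joint_prob_a1 p phi st t + (1 - c) * k * prior p t" for t
    unfolding mix_def using joint_prob_a1_affine[OF scheme] by simp
  moreover have "prob_a1 p phi mix = c * prob_a1 p phi st + (1 - c) * k"
    unfolding prob_a1_eq joint by (simp add: prior_def algebra_simps)
  ultimately have "satisfies l h p phi mix" using assms(7,8) by (simp add: satisfies_def)
  then have "exp_util uR p phi mix \<le> exp_util uR p phi st"
    using opt by (simp add: receiver_opt_def)
  moreover have "gain_T1 uR * (c * x + (1 - c) * k * p) - gain_T2 uR * (c * y + (1 - c) * k * (1 - p))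
      = gain_T1 uR * x - gain_T2 uR * y + (1 - c) * (gain_T1 uR * (k * p - x) - gain_T2 uR * (k * (1 - p) - y))"
    by (simp add: algebra_simps)
  ultimately show ?thesis
    unfolding exp_util_eq_outcome_util[OF scheme] outcome_util_eq joint x_def y_def
    by (simp add: prior_def)
qed

lemma receiver_opt_rational:
  assumes scheme: "is_scheme phi" and opt: "receiver_opt uR l h p phi st"
    and "feasible_constraint p l h"
  defines "x \<equiv> joint_prob_a1 p phi st T1" and "y \<equiv> joint_prob_a1 p phi st T2"
  shows "receiver_rational (gain_T1 uR) (gain_T2 uR) p l h x y"
proof -
  have lh: "0 \<le> l" "l \<le> p" "p \<le> h" "h \<le> 1"
    using assms(3) by (auto simp: feasible_constraint_def)
  have "is_strategy st" and prob: "prob_a1 p phi st = x + y" "l \<le> x + y" "x + y \<le> h"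
    using opt by (auto simp: receiver_opt_def satisfies_def prob_a1_eq x_def y_def)
  moreover have "0 \<le> p" "p \<le> 1" using lh by linarith+
  ultimately have "0 \<le> x" "x \<le> p" "0 \<le> y" "y \<le> 1 - p"
    using joint_prob_a1_bounds[OF scheme \<open>is_strategy st\<close> \<open>0 \<le> p\<close> \<open>p \<le> 1\<close>, of T1]
      joint_prob_a1_bounds[OF scheme \<open>is_strategy st\<close> \<open>0 \<le> p\<close> \<open>p \<le> 1\<close>, of T2]
    by (simp_all add: x_def y_def prior_def)
  then have "feasible_outcome p l h x y" using prob by (simp add: feasible_outcome_def)
  moreover have "gain_T2 uR * y \<le> gain_T1 uR * x" if "l < x + y"
  proof -
    define c where "c = l / (x + y)"
    have "0 \<le> c" "c < 1" "c * (x + y) = l"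
      using that lh by (auto simp: c_def divide_less_eq)
    then have "(1 - c) * (gain_T1 uR * (0 * p - x) - gain_T2 uR * (0 * (1 - p) - y)) \<le> 0"
      using receiver_opt_mix_le[OF scheme opt, of c 0] lh by (simp add: prob x_def y_def)
    then show ?thesis using \<open>c < 1\<close> by (simp add: mult_le_0_iff)
  qed
  moreover have "gain_T1 uR * (p - x) \<le> gain_T2 uR * (1 - p - y)" if "x + y < h"
  proof -
    define c where "c = (1 - h) / (1 - (x + y))"
    have "0 \<le> c" "c < 1" "c * (1 - (x + y)) = 1 - h"
      using that lh by (auto simp: c_def divide_less_eq)
    then have "(1 - c) * (gain_T1 uR * (1 * p - x) - gain_T2 uR * (1 * (1 - p) - y)) \<le> 0"
      using receiver_opt_mix_le[OF scheme opt, of c 1] lh by (simp add: prob x_def y_def algebra_simps)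
    then show ?thesis using \<open>c < 1\<close> by (simp add: mult_le_0_iff)
  qed
  ultimately show ?thesis by (simp add: receiver_rational_def)
qed

(* Signal s1 recommends a1. The junk values of x / p at p = 0 and of y / (1 - p) at p = 1
   are harmless: feasibility then forces x = 0 resp. y = 0. *)
definition recommendation_scheme ::
  "'s \<Rightarrow> 's \<Rightarrow> real \<Rightarrow> real \<Rightarrow> real \<Rightarrow> state \<Rightarrow> 's::finite \<Rightarrow> real" where
  "recommendation_scheme s1 s2 p x y t s =
     (let q = (case t of T1 \<Rightarrow> x / p | T2 \<Rightarrow> y / (1 - p))
      in if s = s1 then q else if s = s2 then 1 - q else 0)"

definition obey :: "'s \<Rightarrow> 's \<Rightarrow> real" where
  "obey s1 s = (if s = s1 then 1 else 0)"

lemma sum_two_signals: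
  fixes f :: "'s::finite \<Rightarrow> real"
  assumes "s1 \<noteq> s2"
  shows "(\<Sum>s\<in>UNIV. (if s = s1 then q else if s = s2 then 1 - q else 0) * f s) = q * f s1 + (1 - q) * f s2"
proof -
  have "(\<Sum>s\<in>UNIV. (if s = s1 then q else if s = s2 then 1 - q else 0) * f s) =
      (\<Sum>s\<in>UNIV. (if s = s1 then q * f s1 else 0) + (if s = s2 then (1 - q) * f s2 else 0))"
    by (rule sum.cong) (use assms in auto)
  then show ?thesis by (simp add: sum.distrib)
qed

lemma mult_divide_cancel_bounded:
  fixes x p :: real
  assumes "0 \<le> x" "x \<le> p"
  shows "p * (x / p) = x"
  using assms by (cases "p = 0") simp_all

lemma joint_prob_a1_recommendation:
  assumes "s1 \<noteq> s2" "feasible_outcome p l h x y"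
  shows "joint_prob_a1 p (recommendation_scheme s1 s2 p x y) st T1 = x * st s1 + (p - x) * st s2"
    and "joint_prob_a1 p (recommendation_scheme s1 s2 p x y) st T2 = y * st s1 + (1 - p - y) * st s2"
proof -
  have cancel: "p * (x / p) = x" "(1 - p) * (y / (1 - p)) = y"
    using assms(2) by (simp_all add: feasible_outcome_def mult_divide_cancel_bounded)
  have mix: "r * (q * u + (1 - q) * v) = (r * q) * u + (r - r * q) * v" for r q u v :: real
    by (simp add: algebra_simps)
  have "joint_prob_a1 p (recommendation_scheme s1 s2 p x y) st T1 =
      p * (x / p * st s1 + (1 - x / p) * st s2)"
    "joint_prob_a1 p (recommendation_scheme s1 s2 p x y) st T2 =
      (1 - p) * (y / (1 - p) * st s1 + (1 - y / (1 - p)) * st s2)"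
    by (simp_all add: joint_prob_a1_def recommendation_scheme_def prior_def Let_def
        sum_two_signals[OF assms(1)])
  then show "joint_prob_a1 p (recommendation_scheme s1 s2 p x y) st T1 = x * st s1 + (p - x) * st s2"
    and "joint_prob_a1 p (recommendation_scheme s1 s2 p x y) st T2 = y * st s1 + (1 - p - y) * st s2"
    by (simp_all only: mix cancel diff_diff_eq)
qed

lemma recommendation_scheme_is_scheme:
  assumes "s1 \<noteq> s2" "feasible_outcome p l h x y"
  shows "is_scheme (recommendation_scheme s1 s2 p x y)"
proof -
  have "0 \<le> x / p" "x / p \<le> 1" "0 \<le> y / (1 - p)" "y / (1 - p) \<le> 1"
    using assms(2) by (auto simp: feasible_outcome_def divide_le_eq_1)
  moreover have "(\<Sum>s\<in>UNIV. recommendation_scheme s1 s2 p x y t s) = 1" for t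
    using sum_two_signals[OF assms(1), of _ "\<lambda>_. 1"]
    by (simp add: recommendation_scheme_def Let_def)
  ultimately show ?thesis
    by (auto simp: is_scheme_def recommendation_scheme_def Let_def split: state.split)
qed

lemma joint_prob_a1_obey:
  assumes "s1 \<noteq> s2" "feasible_outcome p l h x y"
  shows "joint_prob_a1 p (recommendation_scheme s1 s2 p x y) (obey s1) T1 = x"
    and "joint_prob_a1 p (recommendation_scheme s1 s2 p x y) (obey s1) T2 = y"
  using assms by (simp_all add: joint_prob_a1_recommendation obey_def)

lemma exp_util_obey:
  assumes "s1 \<noteq> s2" "feasible_outcome p l h x y"
  shows "exp_util u p (recommendation_scheme s1 s2 p x y) (obey s1) = outcome_util u p x y"
  using assms by (simp add: exp_util_eq_outcome_util recommendation_scheme_is_scheme joint_prob_a1_obey)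

lemma obey_receiver_opt:
  assumes "s1 \<noteq> s2" "feasible_outcome p l h x y" "obedient (gain_T1 uR) (gain_T2 uR) p x y"
  shows "receiver_opt uR l h p (recommendation_scheme s1 s2 p x y) (obey s1)"
proof -
  let ?psi = "recommendation_scheme s1 s2 p x y"
  note joint = joint_prob_a1_recommendation[OF assms(1,2)]
  note util = exp_util_eq_outcome_util[OF recommendation_scheme_is_scheme[OF assms(1,2)]]
  note obey = joint_prob_a1_obey[OF assms(1,2)]
  have "satisfies l h p ?psi (obey s1)"
    using assms(2) by (simp add: satisfies_def is_strategy_def obey_def prob_a1_eq obey feasible_outcome_def)
  moreover have "exp_util uR p ?psi st \<le> exp_util uR p ?psi (obey s1)" if "satisfies l h p ?psi st" for st
  proof -
    have "0 \<le> st s1" "st s1 \<le> 1" "0 \<le> st s2" using that by (simp_all add: satisfies_def is_strategy_def)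
    moreover have "0 \<le> gain_T1 uR * x - gain_T2 uR * y" "gain_T1 uR * (p - x) - gain_T2 uR * (1 - p - y) \<le> 0"
      using assms(3) by (simp_all add: obedient_def)
    ultimately have "st s1 * (gain_T1 uR * x - gain_T2 uR * y) \<le> gain_T1 uR * x - gain_T2 uR * y"
      "st s2 * (gain_T1 uR * (p - x) - gain_T2 uR * (1 - p - y)) \<le> 0"
      by (simp_all add: mult_left_le_one_le mult_nonneg_nonpos)
    then show ?thesis
      unfolding util obey unfolding joint outcome_util_eq by (simp add: algebra_simps)
  qed
  ultimately show ?thesis by (simp add: receiver_opt_def)
qed

definition target_util ::
  "(state \<Rightarrow> action \<Rightarrow> real) \<Rightarrow> (state \<Rightarrow> action \<Rightarrow> real) \<Rightarrow> real \<Rightarrow> real \<Rightarrow> real \<Rightarrow>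
   (state \<Rightarrow> action \<Rightarrow> real) \<Rightarrow> real" where
  "target_util uS uR p l h u = outcome_util u p
     (target_x (gain_T1 uR) (gain_T2 uR) (gain_T1 uS) p l) (target_y (gain_T1 uR) (gain_T2 uR) (gain_T2 uS) p h)"

lemma receiver_opt_util_le_target:
  assumes "0 \<le> gain_T1 uR" "0 \<le> gain_T2 uR" "0 \<le> gain_T1 uS + gain_T2 uS" "feasible_constraint p l h"
    and "is_scheme psi" "receiver_opt uR l h p psi rho"
  shows "exp_util uS p psi rho \<le> target_util uS uR p l h uS"
    and "target_util uS uR p l h uS \<le> exp_util uS p psi rho \<Longrightarrow>
      exp_util uR p psi rho \<le> target_util uS uR p l h uR"
  using target_lex_max[OF assms(1-4) receiver_opt_rational[OF assms(5,6,4)]]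
  by (simp_all add: exp_util_eq_outcome_util[OF assms(5)] target_util_def outcome_util_eq)

lemma target_implementable:
  fixes s1 s2 :: "'s::finite"
  assumes "s1 \<noteq> s2" "0 \<le> gain_T1 uR" "0 \<le> gain_T2 uR" "0 \<le> gain_T1 uS + gain_T2 uS"
    and "feasible_constraint p l h"
  obtains psi :: "state \<Rightarrow> 's \<Rightarrow> real" and rho
  where "sender_optimal uS uR l h p psi" "best_response uS uR l h p psi rho"
    and "exp_util uS p psi rho = target_util uS uR p l h uS"
    and "exp_util uR p psi rho = target_util uS uR p l h uR"
proof -
  define tx where "tx = target_x (gain_T1 uR) (gain_T2 uR) (gain_T1 uS) p l"
  define ty where "ty = target_y (gain_T1 uR) (gain_T2 uR) (gain_T2 uS) p h"
  define psi where "psi = recommendation_scheme s1 s2 p tx ty"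
  have feasible: "feasible_outcome p l h tx ty" and "obedient (gain_T1 uR) (gain_T2 uR) p tx ty"
    using target_feasible_obedient[OF assms(2-5)] by (simp_all add: tx_def ty_def)
  then have "receiver_opt uR l h p psi (obey s1)"
    unfolding psi_def using assms(1) by (simp add: obey_receiver_opt)
  have util: "exp_util u p psi (obey s1) = target_util uS uR p l h u" for u
    unfolding psi_def exp_util_obey[OF assms(1) feasible] by (simp add: target_util_def tx_def ty_def)
  have bound: "exp_util uS p psi' rho' \<le> exp_util uS p psi (obey s1)"
    if "is_scheme psi'" "receiver_opt uR l h p psi' rho'" for psi' :: "state \<Rightarrow> 's \<Rightarrow> real" and rho'
    using receiver_opt_util_le_target(1)[OF assms(2-5) that] util by simp
  have scheme: "is_scheme psi" unfolding psi_def using assms(1) feasible by (rule recommendation_scheme_is_scheme)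
  have "best_response uS uR l h p psi (obey s1)"
    using bound[OF scheme] \<open>receiver_opt uR l h p psi (obey s1)\<close> by (simp add: best_response_def)
  moreover from this have "sender_optimal uS uR l h p psi"
    using scheme bound by (auto simp: sender_optimal_def best_response_def)
  ultimately show ?thesis using that util by blast
qed

lemma sender_optimal_receiver_util_le:
  fixes phi :: "state \<Rightarrow> 's::finite \<Rightarrow> real" and s1 s2 :: 's
  assumes "s1 \<noteq> s2" "0 \<le> gain_T1 uR" "0 \<le> gain_T2 uR" "0 \<le> gain_T1 uS + gain_T2 uS"
    and "feasible_constraint p l h"
    and "sender_optimal uS uR l h p phi" "best_response uS uR l h p phi st"
  shows "exp_util uR p phi st \<le> target_util uS uR p l h uR"
proof -
  obtain psi :: "state \<Rightarrow> 's \<Rightarrow> real" and rho where psi: "sender_optimal uS uR l h p psi"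
    "best_response uS uR l h p psi rho" "exp_util uS p psi rho = target_util uS uR p l h uS"
    using target_implementable[OF assms(1-5)] by blast
  obtain st0 where "best_response uS uR l h p phi st0"
    and "exp_util uS p psi rho \<le> exp_util uS p phi st0"
    using assms(6) psi(1,2) by (auto simp: sender_optimal_def)
  moreover have "exp_util uS p phi st0 \<le> exp_util uS p phi st"
    using assms(7) calculation(1) by (simp add: best_response_def)
  ultimately have "target_util uS uR p l h uS \<le> exp_util uS p phi st" using psi(3) by simp
  moreover have "is_scheme phi" "receiver_opt uR l h p phi st"
    using assms(6,7) by (simp_all add: sender_optimal_def best_response_def)
  ultimately show ?thesis using receiver_opt_util_le_target(2)[OF assms(2-5)] by blast
qed

lemma target_util_receiver_mono:
  assumes "0 \<le> gain_T1 uR" "0 \<le> gain_T2 uR" "0 \<le> p" "p \<le> 1" "l' \<le> l" "h \<le> h'"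
  shows "target_util uS uR p l' h' uR \<le> target_util uS uR p l h uR"
  using target_receiver_gain_mono[OF assms] by (simp add: target_util_def outcome_util_eq)

theorem theorem2:
  fixes uS uR :: "state \<Rightarrow> action \<Rightarrow> real"
    and p l h l' h' :: real
    and phi phi' :: "state \<Rightarrow> 's::finite \<Rightarrow> real"
    and st st' :: "'s \<Rightarrow> real"
  assumes card: "card (UNIV :: 's set) \<ge> 2"
    and prior: "0 \<le> p" "p \<le> 1"
    and recv_match: "uR T1 A1 \<ge> uR T1 A2" "uR T2 A2 \<ge> uR T2 A1"
    and send_match: "uS T1 A1 \<ge> uS T2 A1" "uS T2 A2 \<ge> uS T1 A2"
    and cons: "0 \<le> l" "l \<le> h" "h \<le> 1" "0 \<le> l'" "l' \<le> h'" "h' \<le> 1"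
    and feas: "l \<le> p" "p \<le> h" "l' \<le> p" "p \<le> h'"
    and binding: "l' \<le> l" "h \<le> h'"
    and opt: "sender_optimal uS uR l h p phi" "best_response uS uR l h p phi st"
    and max: "\<And>(psi :: state \<Rightarrow> 's \<Rightarrow> real) rho. sender_optimal uS uR l h p psi \<Longrightarrow> best_response uS uR l h p psi rho \<Longrightarrow>
                exp_util uR p psi rho \<le> exp_util uR p phi st"
    and opt': "sender_optimal uS uR l' h' p phi'" "best_response uS uR l' h' p phi' st'"
    and max': "\<And>(psi :: state \<Rightarrow> 's \<Rightarrow> real) rho. sender_optimal uS uR l' h' p psi \<Longrightarrow> best_response uS uR l' h' p psi rho \<Longrightarrow>
                exp_util uR p psi rho \<le> exp_util uR p phi' st'"
  shows "exp_util uR p phi st \<ge> exp_util uR p phi' st'"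
  proof -
  obtain s1 s2 :: 's where "s1 \<noteq> s2"
    using card card_le_Suc0_iff_eq[of "UNIV :: 's set"] by fastforce
  have gains: "0 \<le> gain_T1 uR" "0 \<le> gain_T2 uR" "0 \<le> gain_T1 uS + gain_T2 uS"
    using recv_match send_match by (simp_all add: gain_T1_def gain_T2_def)
  have "feasible_constraint p l h" "feasible_constraint p l' h'"
    using cons feas by (simp_all add: feasible_constraint_def)
  obtain psi :: "state \<Rightarrow> 's \<Rightarrow> real" and rho
    where "sender_optimal uS uR l h p psi" "best_response uS uR l h p psi rho"
      and "exp_util uR p psi rho = target_util uS uR p l h uR"
    using target_implementable[OF \<open>s1 \<noteq> s2\<close> gains \<open>feasible_constraint p l h\<close>] by metis
  then have "target_util uS uR p l h uR \<le> exp_util uR p phi st"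
    using max by metis
  moreover have "exp_util uR p phi' st' \<le> target_util uS uR p l' h' uR"
    using sender_optimal_receiver_util_le[OF \<open>s1 \<noteq> s2\<close> gains \<open>feasible_constraint p l' h'\<close> opt'] .
  moreover have "target_util uS uR p l' h' uR \<le> target_util uS uR p l h uR"
    using target_util_receiver_mono[OF gains(1,2) prior binding] .
  ultimately show ?thesis by linarith
qed

end
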